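(* Given any $M, K\in\mathbb{N}$ there exists a constant $0<c_{M,K}<1/2$ with the following property. For every $0<\epsilon<c_{M,K}$ there exists $C_{M,K}(\epsilon)>0$ such that for any collection $I_1,\dots,I_K$ of finite open intervals with associated rectangle $R := \prod_{j=1}^K I_j$ one has \[ \int_{R\setminus R^\epsilon}|p(x)|\,\mathrm{d}x \le C_{M,K}(\epsilon)\int_{R^\epsilon}|p(x)|\,\mathrm{d}x \] for every real polynomial $p$ of degree at most $M$ in $x=(x_1,\dots,x_K)$. Moreover, $\lim_{\epsilon\to0}C_{M,K}(\epsilon)=0$ for fixed $M,K$.
   Context: For $0<\epsilon<1/2$, the $\epsilon$-truncation of a finite open interval $I=(a,b)$ is $I^\epsilon := (a+\epsilon(b-a),\, b-\epsilon(b-a))$, and the $\epsilon$-truncation of $R=\prod_{j=1}^K I_j$ is $R^\epsilon := \prod_{j=1}^K I_j^\epsilon$. *)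

theory Defs
  imports "HOL-Analysis.Analysis"
begin

definition poly_deg_le :: "nat \<Rightarrow> (real^'n \<Rightarrow> real) \<Rightarrow> bool" where
  "poly_deg_le M p \<longleftrightarrow>
     (\<exists>c :: ('n \<Rightarrow> nat) \<Rightarrow> real.
        p = (\<lambda>x. \<Sum>\<alpha>\<in>{\<alpha>. (\<Sum>i\<in>UNIV. \<alpha> i) \<le> M}. c \<alpha> * (\<Prod>i\<in>UNIV. (x$i) ^ (\<alpha> i))))"

definition rect :: "real^'n \<Rightarrow> real^'n \<Rightarrow> (real^'n) set" where
  "rect a b = box a b"

definition rect_trunc :: "real \<Rightarrow> real^'n \<Rightarrow> real^'n \<Rightarrow> (real^'n) set" where
  "rect_trunc eps a b = box (a + eps *\<^sub>R (b - a)) (b - eps *\<^sub>R (b - a))"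

end

theory Submission
  imports Defs "HOL-Computational_Algebra.Polynomial"
begin

text \<open>On the finite-dimensional space of polynomials of degree at most \<open>M\<close>, the \<open>\<ell>\<^sup>1\<close> norm of
  the coefficients and the \<open>L\<^sup>1\<close> norm on the cube \<open>[1/4, 3/4]\<^sup>K\<close> are equivalent, because a
  polynomial vanishing on an open set has zero coefficients. The coefficient norm bounds
  \<open>|p|\<close> on the unit cube, so after mapping a rectangle \<open>R\<close> affinely onto the unit cube,
  \<open>sup\<^sub>R |p| \<le> D |R|\<^sup>-\<^sup>1 \<integral>\<^bsub>R\<^sup>1\<^sup>/\<^sup>4\<^esub> |p|\<close>. For \<open>\<epsilon> < 1/4\<close> the truncation \<open>R\<^sup>\<epsilon>\<close> contains \<open>R\<^sup>1\<^sup>/\<^sup>4\<close>, and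
  the shell \<open>R - R\<^sup>\<epsilon>\<close> has volume \<open>(1 - (1 - 2\<epsilon>)\<^sup>K) |R|\<close>, so one may take
  \<open>C(\<epsilon>) = D (1 - (1 - 2\<epsilon>)\<^sup>K)\<close>.\<close>

hide_const (open) Polynomial.content

definition multi_indices :: "nat \<Rightarrow> ('n::finite \<Rightarrow> nat) set" where
  "multi_indices M = {\<alpha>. (\<Sum>i\<in>UNIV. \<alpha> i) \<le> M}"

definition cart_monomial :: "('n::finite \<Rightarrow> nat) \<Rightarrow> real^'n \<Rightarrow> real" where
  "cart_monomial \<alpha> x = (\<Prod>i\<in>UNIV. (x$i) ^ (\<alpha> i))"

definition cart_poly :: "nat \<Rightarrow> (('n::finite \<Rightarrow> nat) \<Rightarrow> real) \<Rightarrow> real^'n \<Rightarrow> real" where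
  "cart_poly M c x = (\<Sum>\<alpha>\<in>multi_indices M. c \<alpha> * cart_monomial \<alpha> x)"

lemma poly_deg_le_iff_cart_poly: "poly_deg_le M p \<longleftrightarrow> (\<exists>c. p = cart_poly M c)"
  by (simp add: poly_deg_le_def cart_poly_def multi_indices_def cart_monomial_def fun_eq_iff)

lemma multi_indices_le: "\<alpha> \<in> multi_indices M \<Longrightarrow> \<alpha> i \<le> M"
  unfolding multi_indices_def using member_le_sum[of i UNIV \<alpha>] by auto

lemma finite_multi_indices: "finite (multi_indices M :: ('n::finite \<Rightarrow> nat) set)"
proof (rule finite_subset)
  show "multi_indices M \<subseteq> PiE UNIV (\<lambda>_::'n. {..M})"
    using multi_indices_le by (auto simp: PiE_def Pi_def)
qed (intro finite_PiE; simp)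

lemma continuous_on_cart_poly [continuous_intros]: "continuous_on S (cart_poly M c)"
  unfolding cart_poly_def cart_monomial_def by (intro continuous_intros)

subsection \<open>Polynomials vanishing on an open set\<close>

lemma cart_poly_on_line:
  "\<exists>Q. \<forall>t. poly Q t = cart_poly M c (x0 + t *\<^sub>R (x - x0))"
proof
  show "\<forall>t. poly (\<Sum>\<alpha>\<in>multi_indices M. smult (c \<alpha>) (\<Prod>i\<in>UNIV. [:x0$i, x$i - x0$i:] ^ \<alpha> i)) t
           = cart_poly M c (x0 + t *\<^sub>R (x - x0))"
    by (simp add: cart_poly_def cart_monomial_def poly_sum poly_prod algebra_simps)
qed

lemma cart_poly_vanishing_on_ball_imp_zero:
  assumes "d > 0" and zero: "\<And>y. y \<in> ball x0 d \<Longrightarrow> cart_poly M c y = 0"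
  shows "cart_poly M c x = 0"
proof -
  obtain Q where Q: "\<And>t. poly Q t = cart_poly M c (x0 + t *\<^sub>R (x - x0))"
    using cart_poly_on_line by blast
  define r where "r = d / (norm (x - x0) + 1)"
  have "r > 0" using \<open>d > 0\<close> by (simp add: r_def add_nonneg_pos)
  have "{0<..<r} \<subseteq> {t. poly Q t = 0}"
  proof
    fix t assume t: "t \<in> {0<..<r}"
    have "norm (t *\<^sub>R (x - x0)) \<le> t * (norm (x - x0) + 1)"
      using t by simp
    also have "\<dots> < d"
      using t \<open>d > 0\<close> by (simp add: r_def pos_less_divide_eq add_nonneg_pos)
    finally show "t \<in> {t. poly Q t = 0}"
      using zero[of "x0 + t *\<^sub>R (x - x0)"] by (simp add: Q dist_norm)
  qed
  then have "infinite {t. poly Q t = 0}"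
    using \<open>r > 0\<close> infinite_Ioo finite_subset by blast
  then have "Q = 0" using poly_roots_finite by blast
  then show ?thesis using Q[of 1] by simp
qed

lemma sum_low_digits_less:
  fixes idx :: "'n::finite \<Rightarrow> nat"
  assumes "inj idx" and "\<And>i. \<alpha> i \<le> M"
  shows "(\<Sum>i | idx i < m. \<alpha> i * Suc M ^ idx i) < Suc M ^ m"
proof -
  have geom: "M * (\<Sum>k<n. Suc M ^ k) + 1 = Suc M ^ n" for n
    by (induction n) (auto simp: algebra_simps)
  have "(\<Sum>i | idx i < m. \<alpha> i * Suc M ^ idx i) \<le> M * (\<Sum>i | idx i < m. Suc M ^ idx i)"
    using assms(2) by (auto simp: sum_distrib_left intro!: sum_mono)
  also have "(\<Sum>i | idx i < m. Suc M ^ idx i) = (\<Sum>k\<in>idx ` {i. idx i < m}. Suc M ^ k)"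
    using \<open>inj idx\<close> by (simp add: sum.reindex inj_on_def inj_def)
  also have "(\<Sum>k\<in>idx ` {i. idx i < m}. Suc M ^ k) \<le> (\<Sum>k<m. Suc M ^ k)"
    by (intro sum_mono2) auto
  finally have "(\<Sum>i | idx i < m. \<alpha> i * Suc M ^ idx i) \<le> M * (\<Sum>k<m. Suc M ^ k)"
    by (simp add: mult_le_mono2)
  then show ?thesis
    using geom[of m] by linarith
qed

lemma digit_of_base_expansion:
  fixes idx :: "'n::finite \<Rightarrow> nat"
  assumes "inj idx" and le: "\<And>i. \<alpha> i \<le> M"
  shows "(\<Sum>i\<in>UNIV. \<alpha> i * Suc M ^ idx i) div Suc M ^ idx j mod Suc M = \<alpha> j"
proof -
  define low where "low = (\<Sum>i | idx i < idx j. \<alpha> i * Suc M ^ idx i)"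
  define high where "high = (\<Sum>i | idx j < idx i. \<alpha> i * Suc M ^ idx i)"
  have U: "UNIV = {i. idx i < idx j} \<union> insert j {i. idx j < idx i}"
    using \<open>inj idx\<close> by (auto simp: inj_def) (metis linorder_neqE_nat)
  have split: "(\<Sum>i\<in>UNIV. \<alpha> i * Suc M ^ idx i) = low + \<alpha> j * Suc M ^ idx j + high"
    unfolding low_def high_def by (subst U, subst sum.union_disjoint) auto
  have "Suc M ^ Suc (idx j) dvd high"
    unfolding high_def by (intro dvd_sum dvd_mult le_imp_power_dvd) auto
  then obtain q where "high = Suc M ^ idx j * (Suc M * q)"
    by (metis dvd_def mult.assoc power_Suc2)
  with split have "(\<Sum>i\<in>UNIV. \<alpha> i * Suc M ^ idx i) = low + Suc M ^ idx j * (\<alpha> j + Suc M * q)"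
    by (simp add: algebra_simps)
  moreover have "low < Suc M ^ idx j"
    unfolding low_def by (rule sum_low_digits_less[OF assms])
  ultimately have "(\<Sum>i\<in>UNIV. \<alpha> i * Suc M ^ idx i) div Suc M ^ idx j = \<alpha> j + Suc M * q"
    by simp
  then show ?thesis
    using le[of j] by (simp only: mod_mult_self2 mod_less le_imp_less_Suc)
qed

lemma inj_on_base_expansion:
  fixes idx :: "'n::finite \<Rightarrow> nat"
  assumes "inj idx"
  shows "inj_on (\<lambda>\<beta>. \<Sum>i\<in>UNIV. \<beta> i * Suc M ^ idx i) (multi_indices M)"
proof (rule inj_onI, rule ext)
  fix \<beta> \<gamma> j
  assume "\<beta> \<in> multi_indices M" "\<gamma> \<in> multi_indices M"
    and "(\<Sum>i\<in>UNIV. \<beta> i * Suc M ^ idx i) = (\<Sum>i\<in>UNIV. \<gamma> i * Suc M ^ idx i)"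
  then show "\<beta> j = \<gamma> j"
    using digit_of_base_expansion[OF assms, of \<beta> M j] digit_of_base_expansion[OF assms, of \<gamma> M j]
    by (simp add: multi_indices_le)
qed

text \<open>Kronecker substitution: on the curve \<open>x\<^sub>i = t ^ (M + 1) ^ idx i\<close> distinct multi-indices
  of degree at most \<open>M\<close> become distinct powers of \<open>t\<close>.\<close>
lemma cart_poly_eq_zero_imp_coeff_eq_zero:
  assumes zero: "\<And>x. cart_poly M c (x::real^'n::finite) = 0" and "\<alpha> \<in> multi_indices M"
  shows "c \<alpha> = 0"
proof -
  obtain idx :: "'n \<Rightarrow> nat" where "inj idx"
    using finite_imp_inj_to_nat_seg[of "UNIV :: 'n set"] by auto
  define e where "e = (\<lambda>\<beta>::'n \<Rightarrow> nat. \<Sum>i\<in>UNIV. \<beta> i * Suc M ^ idx i)"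
  define Q where "Q = (\<Sum>\<beta>\<in>multi_indices M. monom (c \<beta>) (e \<beta>))"
  have "poly Q t = cart_poly M c (\<chi> i. t ^ (Suc M ^ idx i))" for t
    by (simp add: Q_def cart_poly_def cart_monomial_def e_def poly_sum poly_monom power_sum
        power_mult[symmetric] mult.commute)
  then have "Q = 0"
    using zero poly_all_0_iff_0 by auto
  then have "0 = coeff Q (e \<alpha>)" by simp
  also have "\<dots> = (\<Sum>\<beta>\<in>multi_indices M. if \<beta> = \<alpha> then c \<beta> else 0)"
    using inj_on_base_expansion[OF \<open>inj idx\<close>, of M] \<open>\<alpha> \<in> multi_indices M\<close>
    unfolding Q_def coeff_sum coeff_monom e_def by (intro sum.cong) (auto dest: inj_onD)
  also have "\<dots> = c \<alpha>"
    using \<open>\<alpha> \<in> multi_indices M\<close> by (simp add: finite_multi_indices)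
  finally show ?thesis by simp
qed

lemma cart_poly_vanishing_on_open_imp_coeff_eq_zero:
  assumes "open S" "S \<noteq> {}" "\<And>x. x \<in> S \<Longrightarrow> cart_poly M c x = 0" "\<alpha> \<in> multi_indices M"
  shows "c \<alpha> = 0"
proof -
  obtain x0 where "x0 \<in> S"
    using assms(2) by blast
  then obtain d where "d > 0" "ball x0 d \<subseteq> S"
    using assms(1) open_contains_ball_eq by blast
  then have "cart_poly M c x = 0" for x
    using assms(3) cart_poly_vanishing_on_ball_imp_zero[OF \<open>d > 0\<close>] by blast
  then show ?thesis
    using assms(4) by (rule cart_poly_eq_zero_imp_coeff_eq_zero)
qed

subsection \<open>Equivalence of norms on coefficient vectors\<close>

lemma abs_cart_poly_le_coeff_norm:
  assumes "\<And>i. 0 \<le> y$i \<and> y$i \<le> 1"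
  shows "\<bar>cart_poly M c y\<bar> \<le> (\<Sum>\<alpha>\<in>multi_indices M. \<bar>c \<alpha>\<bar>)"
proof -
  have "\<bar>cart_monomial \<alpha> y\<bar> \<le> 1" for \<alpha>
    unfolding cart_monomial_def abs_prod using assms
    by (intro prod_le_1) (auto simp: power_abs intro: power_le_one)
  then have "\<bar>c \<alpha> * cart_monomial \<alpha> y\<bar> \<le> \<bar>c \<alpha>\<bar>" for \<alpha>
    by (simp add: abs_mult mult_left_le)
  then show ?thesis
    unfolding cart_poly_def by (rule order_trans[OF sum_abs sum_mono])
qed

lemma compact_l1_sphere:
  assumes "finite A"
  shows "compact {c :: 'a \<Rightarrow> real. (\<forall>\<alpha>. \<alpha> \<notin> A \<longrightarrow> c \<alpha> = 0) \<and> (\<Sum>\<alpha>\<in>A. \<bar>c \<alpha>\<bar>) = 1}"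
    (is "compact ?S")
proof -
  define I where "I = (\<lambda>\<alpha>. if \<alpha> \<in> A then {-1..1} else {0::real})"
  have "compactin (product_topology (\<lambda>_. euclidean) UNIV) (PiE UNIV I)"
    by (subst compactin_PiE) (auto simp: I_def)
  then have "compact (PiE UNIV I)"
    by (simp add: euclidean_product_topology)
  moreover have "closed {c :: 'a \<Rightarrow> real. (\<Sum>\<alpha>\<in>A. \<bar>c \<alpha>\<bar>) = 1}"
    by (intro closed_Collect_eq continuous_intros continuous_on_product_coordinates)
  moreover have "?S = PiE UNIV I \<inter> {c. (\<Sum>\<alpha>\<in>A. \<bar>c \<alpha>\<bar>) = 1}"
  proof -
    have "c \<alpha> \<in> I \<alpha>" if "c \<in> ?S" for c \<alpha>
    proof (cases "\<alpha> \<in> A")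
      case True
      then have "\<bar>c \<alpha>\<bar> \<le> 1"
        using that member_le_sum[of \<alpha> A "\<lambda>\<alpha>. \<bar>c \<alpha>\<bar>"] \<open>finite A\<close> by simp
      then show ?thesis
        using True by (simp add: I_def abs_le_iff)
    qed (use that in \<open>simp add: I_def\<close>)
    moreover have "c \<alpha> = 0" if "c \<in> PiE UNIV I" "\<alpha> \<notin> A" for c \<alpha>
      using that by (auto simp: I_def PiE_iff dest: spec[of _ \<alpha>])
    ultimately show ?thesis
      unfolding PiE_UNIV_domain Pi_iff by blast
  qed
  ultimately show ?thesis
    by (simp add: compact_Int_closed)
qed

lemma continuous_on_integral_abs_cart_poly:
  "continuous_on UNIV (\<lambda>c. integral (cbox u v) (\<lambda>y. \<bar>cart_poly M c y\<bar>))"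
proof (rule integral_continuous_on_param)
  have coord: "continuous_on (UNIV \<times> cbox u v) (\<lambda>z. fst z \<alpha>)" for \<alpha> :: "'n \<Rightarrow> nat"
    by (rule continuous_on_compose2[OF continuous_on_product_coordinates continuous_on_fst])
      (auto intro: continuous_on_id)
  have "continuous_on (UNIV \<times> cbox u v)
      (\<lambda>z. \<bar>\<Sum>\<alpha>\<in>multi_indices M. fst z \<alpha> * cart_monomial \<alpha> (snd z)\<bar>)"
    unfolding cart_monomial_def by (intro continuous_intros coord)
  then show "continuous_on (UNIV \<times> cbox u v) (\<lambda>(c, y). \<bar>cart_poly M c y\<bar>)"
    by (simp add: cart_poly_def case_prod_beta)
qed

lemma integral_abs_cart_poly_pos:
  assumes "box u v \<noteq> {}" and "\<alpha> \<in> multi_indices M" "c \<alpha> \<noteq> 0"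
  shows "integral (cbox u v) (\<lambda>y. \<bar>cart_poly M c y\<bar>) > 0"
proof -
  have "\<not> (\<forall>y\<in>cbox u v. \<bar>cart_poly M c y\<bar> = 0)"
    using cart_poly_vanishing_on_open_imp_coeff_eq_zero[of "box u v" M c \<alpha>] assms
    by (auto dest: subsetD[OF box_subset_cbox])
  then have "integral (cbox u v) (\<lambda>y. \<bar>cart_poly M c y\<bar>) \<noteq> 0"
    using integral_cbox_eq_0_iff[of u v "\<lambda>y. \<bar>cart_poly M c y\<bar>"] assms(1)
    by (auto intro: continuous_intros)
  moreover have "integral (cbox u v) (\<lambda>y. \<bar>cart_poly M c y\<bar>) \<ge> 0"
    by (intro integral_nonneg integrable_continuous continuous_intros) auto
  ultimately show ?thesis by linarith
qed

lemma integral_abs_cart_poly_min_on_sphere: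
  fixes u v :: "real^'n::finite"
  assumes "box u v \<noteq> {}"
  shows "\<exists>m>0. \<forall>c. (\<forall>\<alpha>. \<alpha> \<notin> multi_indices M \<longrightarrow> c \<alpha> = 0) \<longrightarrow>
                 (\<Sum>\<alpha>\<in>multi_indices M. \<bar>c \<alpha>\<bar>) = 1 \<longrightarrow>
                 m \<le> integral (cbox u v) (\<lambda>y. \<bar>cart_poly M c y\<bar>)"
proof -
  define A where "A = (multi_indices M :: ('n \<Rightarrow> nat) set)"
  define F where "F = (\<lambda>c. integral (cbox u v) (\<lambda>y. \<bar>cart_poly M c y\<bar>))"
  define S where "S = {c :: ('n \<Rightarrow> nat) \<Rightarrow> real. (\<forall>\<alpha>. \<alpha> \<notin> A \<longrightarrow> c \<alpha> = 0) \<and> (\<Sum>\<alpha>\<in>A. \<bar>c \<alpha>\<bar>) = 1}"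
  have "finite A"
    by (simp add: A_def finite_multi_indices)
  have "(\<lambda>_. 0) \<in> A"
    by (simp add: A_def multi_indices_def)
  then have "(\<lambda>\<alpha>. if \<alpha> = (\<lambda>_. 0) then 1 else 0) \<in> S"
    using \<open>finite A\<close> by (simp add: S_def if_distrib sum.delta cong: if_cong)
  then have "S \<noteq> {}" by blast
  have "compact S"
    unfolding S_def by (rule compact_l1_sphere[OF \<open>finite A\<close>])
  have "continuous_on S F"
    unfolding F_def by (rule continuous_on_subset[OF continuous_on_integral_abs_cart_poly]) simp
  obtain c0 where "c0 \<in> S" and min: "\<And>c. c \<in> S \<Longrightarrow> F c0 \<le> F c"
    using continuous_attains_inf[OF \<open>compact S\<close> \<open>S \<noteq> {}\<close> \<open>continuous_on S F\<close>] by blast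
  then have "(\<Sum>\<alpha>\<in>A. \<bar>c0 \<alpha>\<bar>) \<noteq> 0"
    by (simp add: S_def)
  then obtain \<alpha> where "\<alpha> \<in> A" "c0 \<alpha> \<noteq> 0"
    by (rule sum.not_neutral_contains_not_neutral) simp
  then have "F c0 > 0"
    unfolding F_def A_def by (rule integral_abs_cart_poly_pos[OF assms])
  with min show ?thesis
    unfolding S_def A_def F_def by blast
qed

lemma coeff_norm_le_integral_abs_cart_poly:
  fixes u v :: "real^'n::finite"
  assumes "box u v \<noteq> {}"
  shows "\<exists>D>0. \<forall>c. (\<Sum>\<alpha>\<in>multi_indices M. \<bar>c \<alpha>\<bar>)
                      \<le> D * integral (cbox u v) (\<lambda>y. \<bar>cart_poly M c y\<bar>)"
proof -
  define A where "A = (multi_indices M :: ('n \<Rightarrow> nat) set)"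
  define F where "F = (\<lambda>c. integral (cbox u v) (\<lambda>y. \<bar>cart_poly M c y\<bar>))"
  obtain m where "m > 0" and m: "\<And>c. \<forall>\<alpha>. \<alpha> \<notin> A \<longrightarrow> c \<alpha> = 0 \<Longrightarrow>
      (\<Sum>\<alpha>\<in>A. \<bar>c \<alpha>\<bar>) = 1 \<Longrightarrow> m \<le> F c"
    using integral_abs_cart_poly_min_on_sphere[OF assms, of M] unfolding A_def F_def by blast
  have "(\<Sum>\<alpha>\<in>A. \<bar>c \<alpha>\<bar>) \<le> (1 / m) * F c" for c
  proof (cases "(\<Sum>\<alpha>\<in>A. \<bar>c \<alpha>\<bar>) = 0")
    case True
    have "F c \<ge> 0"
      unfolding F_def by (intro integral_nonneg integrable_continuous continuous_intros) auto
    with True \<open>m > 0\<close> show ?thesis by simp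
  next
    case False
    define s where "s = (\<Sum>\<alpha>\<in>A. \<bar>c \<alpha>\<bar>)"
    have "s > 0"
      using False by (simp add: s_def order_less_le sum_nonneg)
    define c' where "c' = (\<lambda>\<alpha>. if \<alpha> \<in> A then c \<alpha> / s else 0)"
    have "(\<Sum>\<alpha>\<in>A. \<bar>c' \<alpha>\<bar>) = 1"
      using \<open>s > 0\<close> by (simp add: c'_def s_def sum_divide_distrib[symmetric])
    then have "m \<le> F c'"
      by (intro m) (simp_all add: c'_def)
    moreover have "cart_poly M c' y = cart_poly M c y / s" for y
      unfolding cart_poly_def sum_divide_distrib A_def by (intro sum.cong) (auto simp: c'_def A_def)
    then have "F c' = F c / s"
      using \<open>s > 0\<close> by (simp add: F_def)
    ultimately show ?thesis
      using \<open>s > 0\<close> \<open>m > 0\<close> by (simp add: s_def field_simps)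
  qed
  moreover have "1 / m > 0"
    using \<open>m > 0\<close> by simp
  ultimately show ?thesis
    unfolding A_def F_def by blast
qed

subsection \<open>Affine changes of variables\<close>

lemma cart_monomial_affine:
  "cart_monomial \<alpha> (a + h * y) =
     (\<Sum>g\<in>PiE UNIV (\<lambda>i. {..\<alpha> i}).
        (\<Prod>i\<in>UNIV. of_nat (\<alpha> i choose g i) * (h$i) ^ g i * (a$i) ^ (\<alpha> i - g i)) * cart_monomial g y)"
proof -
  have "cart_monomial \<alpha> (a + h * y) = (\<Prod>i\<in>UNIV. (h$i * y$i + a$i) ^ \<alpha> i)"
    by (simp add: cart_monomial_def add.commute)
  also have "\<dots> = (\<Prod>i\<in>UNIV. \<Sum>k\<le>\<alpha> i. (of_nat (\<alpha> i choose k) * (h$i) ^ k * (a$i) ^ (\<alpha> i - k)) * (y$i) ^ k)"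
    by (intro prod.cong refl, subst binomial_ring) (simp add: power_mult_distrib algebra_simps)
  also have "\<dots> = (\<Sum>g\<in>PiE UNIV (\<lambda>i. {..\<alpha> i}).
      \<Prod>i\<in>UNIV. (of_nat (\<alpha> i choose g i) * (h$i) ^ g i * (a$i) ^ (\<alpha> i - g i)) * (y$i) ^ g i)"
    by (rule prod_sum_PiE) auto
  finally show ?thesis
    by (simp add: cart_monomial_def prod.distrib)
qed

lemma PiE_atMost_subset_multi_indices:
  "\<alpha> \<in> multi_indices M \<Longrightarrow> PiE UNIV (\<lambda>i. {..\<alpha> i}) \<subseteq> multi_indices M"
  unfolding multi_indices_def by (auto simp: PiE_iff intro: order_trans[OF sum_mono])

lemma poly_deg_le_affine:
  fixes a h :: "real^'n::finite"
  assumes "poly_deg_le M p"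
  shows "poly_deg_le M (\<lambda>y. p (a + h * y))"
proof -
  obtain c where p: "p = cart_poly M c"
    using assms by (auto simp: poly_deg_le_iff_cart_poly)
  define A where "A = (multi_indices M :: ('n \<Rightarrow> nat) set)"
  define G where "G = (\<lambda>\<alpha>::'n \<Rightarrow> nat. PiE UNIV (\<lambda>i. {..\<alpha> i}))"
  define W where "W = (\<lambda>\<alpha> g. \<Prod>i\<in>UNIV. of_nat (\<alpha> i choose g i) * (h$i) ^ g i * (a$i) ^ (\<alpha> i - g i) :: real)"
  define c' where "c' = (\<lambda>g. \<Sum>\<alpha>\<in>A. if g \<in> G \<alpha> then c \<alpha> * W \<alpha> g else 0)"
  have "p (a + h * y) = cart_poly M c' y" for y
  proof -
    have "p (a + h * y) = (\<Sum>\<alpha>\<in>A. c \<alpha> * (\<Sum>g\<in>G \<alpha>. W \<alpha> g * cart_monomial g y))"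
      unfolding p cart_poly_def A_def G_def W_def cart_monomial_affine ..
    also have "\<dots> = (\<Sum>\<alpha>\<in>A. \<Sum>g\<in>A. (if g \<in> G \<alpha> then c \<alpha> * W \<alpha> g else 0) * cart_monomial g y)"
    proof (rule sum.cong[OF refl])
      fix \<alpha> assume "\<alpha> \<in> A"
      then have sub: "A \<inter> G \<alpha> = G \<alpha>"
        using PiE_atMost_subset_multi_indices by (auto simp: A_def G_def)
      have "c \<alpha> * (\<Sum>g\<in>G \<alpha>. W \<alpha> g * cart_monomial g y) = (\<Sum>g\<in>A \<inter> G \<alpha>. c \<alpha> * W \<alpha> g * cart_monomial g y)"
        unfolding sub sum_distrib_left by (simp add: mult.assoc)
      also have "\<dots> = (\<Sum>g\<in>A. if g \<in> G \<alpha> then c \<alpha> * W \<alpha> g * cart_monomial g y else 0)"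
        by (simp add: sum.inter_restrict A_def finite_multi_indices)
      also have "\<dots> = (\<Sum>g\<in>A. (if g \<in> G \<alpha> then c \<alpha> * W \<alpha> g else 0) * cart_monomial g y)"
        by (intro sum.cong) auto
      finally show "c \<alpha> * (\<Sum>g\<in>G \<alpha>. W \<alpha> g * cart_monomial g y) =
          (\<Sum>g\<in>A. (if g \<in> G \<alpha> then c \<alpha> * W \<alpha> g else 0) * cart_monomial g y)" .
    qed
    also have "\<dots> = (\<Sum>g\<in>A. \<Sum>\<alpha>\<in>A. (if g \<in> G \<alpha> then c \<alpha> * W \<alpha> g else 0) * cart_monomial g y)"
      by (rule sum.swap)
    also have "\<dots> = cart_poly M c' y"
      unfolding cart_poly_def A_def c'_def sum_distrib_right ..
    finally show ?thesis .
  qed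
  then show ?thesis
    by (auto simp: poly_deg_le_iff_cart_poly)
qed

lemma integral_cart_affine_cbox:
  fixes f :: "real^'n::finite \<Rightarrow> real"
  assumes h: "\<And>i. 0 < h$i" and f: "f integrable_on cbox (a + h * u) (a + h * v)"
  shows "integral (cbox (a + h * u) (a + h * v)) f
           = (\<Prod>i\<in>UNIV. h$i) * integral (cbox u v) (\<lambda>y. f (a + h * y))"
proof -
  define I where "I = integral (cbox (a + h * u) (a + h * v)) f"
  have "(\<lambda>z. f (z + a)) integrable_on cbox (h * u) (h * v)"
    using integrable_shift_cbox[OF f, of a] by (simp add: add.commute)
  then have shifted: "((\<lambda>z. f (z + a)) has_integral I) (cbox (h * u) (h * v))"
    using integrable_integral integral_shift_cbox[of "a + h * u" a "a + h * v" f] unfolding I_def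
    by fastforce
  have "(\<chi> k. h$k * y$k) = h * y" for y
    by (simp add: vec_eq_iff)
  then have "((\<lambda>y. f (a + h * y)) has_integral I /\<^sub>R (\<Prod>i\<in>UNIV. h$i))
               ((\<lambda>x. \<chi> k. x$k / h$k) ` cbox (h * u) (h * v))"
    using has_integral_stretch_cart[OF shifted, of "\<lambda>k. h$k"] h
    by (simp add: less_imp_neq[symmetric] prod_pos less_imp_le add.commute)
  moreover have "(\<lambda>x. \<chi> k. x$k / h$k) ` cbox (h * u) (h * v) = cbox u v"
  proof (intro equalityI subsetI)
    fix y assume "y \<in> cbox u v"
    then have "h * y \<in> cbox (h * u) (h * v)"
      using h by (simp add: mem_box_cart mult_left_mono less_imp_le)
    moreover have "y = (\<chi> k. (h * y)$k / h$k)"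
      using h by (simp add: vec_eq_iff less_imp_neq[symmetric])
    ultimately show "y \<in> (\<lambda>x. \<chi> k. x$k / h$k) ` cbox (h * u) (h * v)"
      by blast
  qed (use h in \<open>auto simp: mem_box_cart divide_le_eq le_divide_eq mult.commute\<close>)
  ultimately have "integral (cbox u v) (\<lambda>y. f (a + h * y)) = I / (\<Prod>i\<in>UNIV. h$i)"
    by (simp add: integral_unique divide_inverse_commute)
  moreover have "(\<Prod>i\<in>UNIV. h$i) > 0"
    using h by (simp add: prod_pos)
  ultimately show ?thesis
    unfolding I_def by (simp del: prod_zero_iff)
qed

lemma continuous_on_poly_deg_le:
  "poly_deg_le M p \<Longrightarrow> continuous_on S p"
  by (auto simp: poly_deg_le_iff_cart_poly intro: continuous_on_cart_poly)

lemma abs_poly_le_middle_box_integral: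
  fixes a b :: "real^'n::finite"
  assumes D: "\<And>c. (\<Sum>\<alpha>\<in>multi_indices M. \<bar>c \<alpha>\<bar>)
      \<le> D * integral (cbox (\<chi> i. 1/4) (\<chi> i. 3/4 :: real^'n)) (\<lambda>y. \<bar>cart_poly M c y\<bar>)"
    and ab: "\<forall>i. a$i < b$i" and p: "poly_deg_le M p" and x: "x \<in> cbox a b"
  shows "\<bar>p x\<bar> * content (cbox a b)
           \<le> D * integral (cbox (a + (1/4) *\<^sub>R (b - a)) (b - (1/4) *\<^sub>R (b - a))) (\<lambda>x. \<bar>p x\<bar>)"
proof -
  define u v :: "real^'n" where "u = (\<chi> i. 1/4)" and "v = (\<chi> i. 3/4)"
  define h where "h = b - a"
  have h: "0 < h$i" for i
    using ab by (simp add: h_def)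
  obtain c where c: "\<And>y. p (a + h * y) = cart_poly M c y"
    using poly_deg_le_affine[OF p, of a h] by (metis poly_deg_le_iff_cart_poly)
  define y where "y = (\<chi> i. (x$i - a$i) / h$i)"
  have "x = a + h * y"
    using h by (simp add: y_def vec_eq_iff less_imp_neq[symmetric])
  then have "\<bar>p x\<bar> = \<bar>cart_poly M c y\<bar>"
    by (simp add: c)
  also have "\<dots> \<le> (\<Sum>\<alpha>\<in>multi_indices M. \<bar>c \<alpha>\<bar>)"
  proof (rule abs_cart_poly_le_coeff_norm)
    fix i
    have "a$i \<le> x$i" "x$i \<le> b$i"
      using x by (simp_all add: mem_box_cart)
    then show "0 \<le> y$i \<and> y$i \<le> 1"
      using h[of i] by (simp add: y_def h_def divide_le_eq_1)
  qed
  also have "\<dots> \<le> D * integral (cbox u v) (\<lambda>y. \<bar>p (a + h * y)\<bar>)"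
    using D[of c] by (simp add: c u_def v_def)
  finally have "\<bar>p x\<bar> * (\<Prod>i\<in>UNIV. h$i)
      \<le> D * ((\<Prod>i\<in>UNIV. h$i) * integral (cbox u v) (\<lambda>y. \<bar>p (a + h * y)\<bar>))"
    using h by (simp add: mult_right_mono prod_pos less_imp_le algebra_simps)
  also have "(\<Prod>i\<in>UNIV. h$i) * integral (cbox u v) (\<lambda>y. \<bar>p (a + h * y)\<bar>)
      = integral (cbox (a + h * u) (a + h * v)) (\<lambda>x. \<bar>p x\<bar>)"
    using continuous_on_poly_deg_le[OF p]
    by (intro integral_cart_affine_cbox[symmetric] h integrable_continuous continuous_intros)
  also have "a + h * u = a + (1/4) *\<^sub>R (b - a)"
    by (simp add: h_def u_def vec_eq_iff)
  also have "a + h * v = b - (1/4) *\<^sub>R (b - a)"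
    by (simp add: h_def v_def vec_eq_iff algebra_simps)
  moreover have "content (cbox a b) = (\<Prod>i\<in>UNIV. h$i)"
    using ab by (simp add: h_def content_cbox_cart interval_ne_empty_cart less_imp_le)
  ultimately show ?thesis
    by simp
qed

subsection \<open>Truncated rectangles\<close>

lemma integral_box_diff_le:
  fixes f :: "'a::euclidean_space \<Rightarrow> real"
  assumes sub: "cbox c d \<subseteq> cbox a b" and f: "continuous_on (cbox a b) f"
    and le: "\<And>x. x \<in> box a b \<Longrightarrow> f x \<le> S"
  shows "integral (box a b - box c d) f \<le> S * (content (cbox a b) - content (cbox c d))"
proof -
  have "box c d \<subseteq> box a b"
    using interior_mono[OF sub] by simp
  have int_ab: "g integrable_on box a b" if "continuous_on (cbox a b) g" for g :: "'a \<Rightarrow> real"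
    using that integrable_continuous integrable_on_open_interval by blast
  have int_cd: "g integrable_on box c d" if "continuous_on (cbox a b) g" for g :: "'a \<Rightarrow> real"
    using that continuous_on_subset[OF _ sub] integrable_continuous integrable_on_open_interval
    by blast
  have int_diff: "g integrable_on box a b - box c d"
    if "continuous_on (cbox a b) g" for g :: "'a \<Rightarrow> real"
    using integrable_setdiff[OF integrable_integral[OF int_ab] integrable_integral[OF int_cd], OF that that]
      \<open>box c d \<subseteq> box a b\<close> by simp
  have "integral (box a b - box c d) f \<le> integral (box a b - box c d) (\<lambda>_. S)"
    using f le by (intro integral_le int_diff continuous_on_const) auto
  also have "\<dots> = integral (box a b) (\<lambda>_. S) - integral (box c d) (\<lambda>_. S)"
    using \<open>box c d \<subseteq> box a b\<close> by (intro integral_setdiff int_ab int_cd continuous_on_const) auto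
  also have "\<dots> = S * (content (cbox a b) - content (cbox c d))"
    by (simp add: integral_open_interval algebra_simps)
  finally show ?thesis .
qed

lemma content_cbox_trunc:
  fixes a b :: "real^'n::finite"
  assumes "\<And>i. a$i \<le> b$i" and "0 \<le> eps" "eps \<le> 1/2"
  shows "content (cbox (a + eps *\<^sub>R (b - a)) (b - eps *\<^sub>R (b - a)))
           = (1 - 2 * eps) ^ CARD('n) * content (cbox a b)"
proof -
  have "(a + eps *\<^sub>R (b - a))$i \<le> (b - eps *\<^sub>R (b - a))$i" for i
    using assms mult_left_mono[of "1/2" "1 - eps" "b$i - a$i"] by (auto simp: algebra_simps)
  moreover have "(\<Prod>i\<in>UNIV. (b - eps *\<^sub>R (b - a))$i - (a + eps *\<^sub>R (b - a))$i)
      = (\<Prod>i\<in>UNIV. (1 - 2 * eps) * (b$i - a$i))"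
    by (intro prod.cong) (simp_all add: algebra_simps)
  ultimately show ?thesis
    using assms(1) by (simp add: content_cbox_cart interval_ne_empty_cart prod.distrib)
qed

lemma cbox_trunc_subset:
  assumes "0 \<le> eps" "\<And>i. a$i \<le> b$i"
  shows "cbox (a + eps *\<^sub>R (b - a)) (b - eps *\<^sub>R (b - a)) \<subseteq> cbox a (b :: real^'n::finite)"
  using assms by (auto simp: mem_box_cart) (smt (verit) mult_nonneg_nonneg)+

lemma middle_box_subset_trunc:
  fixes a b :: "real^'n::finite"
  assumes "eps < 1/4" "\<forall>i. a$i < b$i"
  shows "cbox (a + (1/4) *\<^sub>R (b - a)) (b - (1/4) *\<^sub>R (b - a))
           \<subseteq> box (a + eps *\<^sub>R (b - a)) (b - eps *\<^sub>R (b - a))"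
proof
  fix x assume x: "x \<in> cbox (a + (1/4) *\<^sub>R (b - a)) (b - (1/4) *\<^sub>R (b - a))"
  show "x \<in> box (a + eps *\<^sub>R (b - a)) (b - eps *\<^sub>R (b - a))"
    unfolding mem_box_cart
  proof
    fix i
    have "a$i + (1/4) * (b$i - a$i) \<le> x$i" "x$i \<le> b$i - (1/4) * (b$i - a$i)"
      using x by (simp_all add: mem_box_cart)
    moreover have "eps * (b$i - a$i) < (1/4) * (b$i - a$i)"
      using assms by (intro mult_strict_right_mono) auto
    ultimately show "(a + eps *\<^sub>R (b - a))$i < x$i \<and> x$i < (b - eps *\<^sub>R (b - a))$i"
      by (simp, intro conjI; linarith)
  qed
qed

lemma integral_rect_diff_trunc_le:
  fixes a b :: "real^'n::finite"
  assumes D: "\<And>c. (\<Sum>\<alpha>\<in>multi_indices M. \<bar>c \<alpha>\<bar>)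
      \<le> D * integral (cbox (\<chi> i. 1/4) (\<chi> i. 3/4 :: real^'n)) (\<lambda>y. \<bar>cart_poly M c y\<bar>)"
    and "0 \<le> D" and eps: "0 < eps" "eps < 1/4" and ab: "\<forall>i. a$i < b$i" and p: "poly_deg_le M p"
  shows "integral (rect a b - rect_trunc eps a b) (\<lambda>x. \<bar>p x\<bar>)
           \<le> D * (1 - (1 - 2 * eps) ^ CARD('n)) * integral (rect_trunc eps a b) (\<lambda>x. \<bar>p x\<bar>)"
proof -
  define c d where "c = a + eps *\<^sub>R (b - a)" and "d = b - eps *\<^sub>R (b - a)"
  define J where "J = integral (box c d) (\<lambda>x. \<bar>p x\<bar>)"
  have cont: "continuous_on S (\<lambda>x. \<bar>p x\<bar>)" for S
    using continuous_on_poly_deg_le[OF p] by (intro continuous_intros)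
  have "content (cbox a b) > 0"
    using ab by (simp add: content_cbox_cart interval_ne_empty_cart less_imp_le prod_pos)
  have mid_le: "integral (cbox (a + (1/4) *\<^sub>R (b - a)) (b - (1/4) *\<^sub>R (b - a))) (\<lambda>x. \<bar>p x\<bar>) \<le> J"
    unfolding J_def c_def d_def using cont middle_box_subset_trunc[OF eps(2) ab]
    by (intro integral_subset_le integrable_continuous)
      (auto simp: integrable_on_open_interval intro: integrable_continuous)
  have "\<bar>p x\<bar> \<le> D * J / content (cbox a b)" if "x \<in> box a b" for x
  proof -
    have "\<bar>p x\<bar> * content (cbox a b)
        \<le> D * integral (cbox (a + (1/4) *\<^sub>R (b - a)) (b - (1/4) *\<^sub>R (b - a))) (\<lambda>x. \<bar>p x\<bar>)"
      using abs_poly_le_middle_box_integral[OF D ab p] that box_subset_cbox by blast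
    also have "\<dots> \<le> D * J"
      using mid_le \<open>0 \<le> D\<close> by (simp add: mult_left_mono)
    finally show ?thesis
      using \<open>content (cbox a b) > 0\<close> by (simp add: pos_le_divide_eq)
  qed
  then have "integral (box a b - box c d) (\<lambda>x. \<bar>p x\<bar>)
      \<le> D * J / content (cbox a b) * (content (cbox a b) - content (cbox c d))"
    using ab eps cont cbox_trunc_subset[of eps a b]
    by (intro integral_box_diff_le) (auto simp: c_def d_def less_imp_le)
  also have "content (cbox c d) = (1 - 2 * eps) ^ CARD('n) * content (cbox a b)"
    unfolding c_def d_def using ab eps by (intro content_cbox_trunc) (auto simp: less_imp_le)
  also have "D * J / content (cbox a b) *
      (content (cbox a b) - (1 - 2 * eps) ^ CARD('n) * content (cbox a b))
      = D * (1 - (1 - 2 * eps) ^ CARD('n)) * J"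
    using \<open>content (cbox a b) > 0\<close> by (simp add: field_simps)
  finally show ?thesis
    by (simp add: rect_def rect_trunc_def c_def d_def J_def)
qed

theorem lemma10p1:
  fixes M :: nat
  shows "\<exists>c::real. 0 < c \<and> c < 1/2 \<and>
    (\<exists>C :: real \<Rightarrow> real.
       (\<forall>eps. 0 < eps \<and> eps < c \<longrightarrow>
          C eps > 0 \<and>
          (\<forall>(a::real^'n) b. (\<forall>i. a$i < b$i) \<longrightarrow>
             (\<forall>p. poly_deg_le M p \<longrightarrow>
                integral (rect a b - rect_trunc eps a b) (\<lambda>x. \<bar>p x\<bar>)
                  \<le> C eps * integral (rect_trunc eps a b) (\<lambda>x. \<bar>p x\<bar>))))
       \<and> (C \<longlongrightarrow> 0) (at_right 0))"
proof -
  have "(\<chi> i. 1/2) \<in> box (\<chi> i. 1/4) (\<chi> i. 3/4 :: real^'n)"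
    by (simp add: mem_box_cart)
  then obtain D where "D > 0" and D: "\<And>c. (\<Sum>\<alpha>\<in>multi_indices M. \<bar>c \<alpha>\<bar>)
      \<le> D * integral (cbox (\<chi> i. 1/4) (\<chi> i. 3/4 :: real^'n)) (\<lambda>y. \<bar>cart_poly M c y\<bar>)"
    using coeff_norm_le_integral_abs_cart_poly by blast
  define C where "C = (\<lambda>eps::real. D * (1 - (1 - 2 * eps) ^ CARD('n)))"
  have "C eps > 0" if "0 < eps" "eps < 1/4" for eps
    using \<open>D > 0\<close> that power_strict_decreasing[of 0 "CARD('n)" "1 - 2 * eps"]
    by (simp add: C_def)
  then have "\<forall>eps. 0 < eps \<and> eps < 1/4 \<longrightarrow> C eps > 0 \<and>
      (\<forall>(a::real^'n) b. (\<forall>i. a$i < b$i) \<longrightarrow>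
         (\<forall>p. poly_deg_le M p \<longrightarrow>
            integral (rect a b - rect_trunc eps a b) (\<lambda>x. \<bar>p x\<bar>)
              \<le> C eps * integral (rect_trunc eps a b) (\<lambda>x. \<bar>p x\<bar>)))"
    using integral_rect_diff_trunc_le[OF D] \<open>D > 0\<close> by (simp add: C_def)
  moreover have "((\<lambda>eps::real. D * (1 - (1 - 2 * eps) ^ CARD('n))) \<longlongrightarrow> D * (1 - (1 - 2 * 0) ^ CARD('n)))
      (at_right 0)"
    by (intro tendsto_intros)
  then have "(C \<longlongrightarrow> 0) (at_right 0)"
    by (simp add: C_def)
  ultimately show ?thesis
    by (intro exI[of _ "1/4"] conjI exI[of _ C]) simp_all
qed

end
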